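(* Let $p$ be an odd prime and $n\ge1$ an integer, and let $K_n$ be the complete graph of order $n$. Put $q=\lfloor n/p\rfloor$, $r=n-qp$, $\psi=\max\{0,2r-p+1\}$, $\delta_s=1$ if $s$ is even and $0$ otherwise, and $\mathcal S=\mathcal S_1+\mathcal S_2$ with $$\mathcal S_1=\sum_{\substack{s=2\\ s\ne p}}^{r+1}(s-1-\delta_s)(s/p),\qquad \mathcal S_2=\sum_{\substack{s=r+2\\ s\ne p}}^{2r}(2r-s+1-\delta_s)(s/p).$$ Then $K_n$ is a Legendre cordial graph modulo $p$ if and only if $$\mathcal S=2nq-pq^2-q+\psi\quad\text{or}\quad \mathcal S=2nq-pq^2-q+\psi\pm2.$$
   Context: For an odd prime $p$ and an integer $a$ not divisible by $p$, $(a/p)$ denotes the Legendre symbol: $1$ if $a$ is a quadratic residue mod $p$, $-1$ otherwise. Empty sums equal $0$. For a simple connected graph $G$ of order $n$, a bijection $f:V(G)\to\{1,\dots,n\}$ is a Legendre cordial labeling modulo $p$ if the induced edge labeling $f_p^*:E(G)\to\{0,1\}$, defined by $f_p^*(uv)=0$ if $p\mid f(u)+f(v)$ or $((f(u)+f(v))/p)=-1$, and $f_p^*(uv)=1$ if $((f(u)+f(v))/p)=1$, satisfies $|e_{f_p^*}(0)-e_{f_p^*}(1)|\le1$, where $e_{f_p^*}(i)$ is the number of edges with label $i$. A graph admitting such a labeling is a Legendre cordial graph modulo $p$. *)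

theory Defs
  imports "HOL-Number_Theory.Number_Theory"
begin

definition simple_graph :: "'a set \<Rightarrow> 'a set set \<Rightarrow> bool" where
  "simple_graph V E \<longleftrightarrow> finite V \<and> (\<forall>e\<in>E. e \<subseteq> V \<and> card e = 2)"

definition complete_graph_edges :: "'a set \<Rightarrow> 'a set set" where
  "complete_graph_edges V = {e. e \<subseteq> V \<and> card e = 2}"

text \<open>Induced edge label of edge e = {u,v}: 1 iff (f u + f v / p) = 1, else 0
  (i.e. 0 when p divides f u + f v or the symbol is -1).
  For a 2-element set e, the sum over e is f u + f v.\<close>

definition legendre_edge_label :: "nat \<Rightarrow> ('a \<Rightarrow> nat) \<Rightarrow> 'a set \<Rightarrow> nat" where
  "legendre_edge_label p f e =
     (if Legendre (int (\<Sum>x\<in>e. f x)) (int p) = 1 then 1 else 0)"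

definition legendre_cordial_labeling ::
  "'a set \<Rightarrow> 'a set set \<Rightarrow> nat \<Rightarrow> ('a \<Rightarrow> nat) \<Rightarrow> bool" where
  "legendre_cordial_labeling V E p f \<longleftrightarrow>
     bij_betw f V {1..card V} \<and>
     \<bar>int (card {e\<in>E. legendre_edge_label p f e = 0})
       - int (card {e\<in>E. legendre_edge_label p f e = 1})\<bar> \<le> 1"

definition legendre_cordial_graph :: "'a set \<Rightarrow> 'a set set \<Rightarrow> nat \<Rightarrow> bool" where
  "legendre_cordial_graph V E p \<longleftrightarrow> (\<exists>f. legendre_cordial_labeling V E p f)"

end

theory Submission
  imports Defs
begin

text \<open>
  Relabelling the vertices of \<open>K\<^sub>n\<close> permutes its edges, so \<open>K\<^sub>n\<close> is Legendre cordial iff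
  the identity labeling is, i.e. iff the sum of \<open>w(a + b)\<close> over all \<open>1 \<le> a < b \<le> n\<close> has
  absolute value at most \<open>1\<close>, where \<open>w(s) = [p dvd s] - (s/p)\<close>. The Legendre symbol sums to
  \<open>0\<close> over a period (multiply by a non-residue), so \<open>w\<close> sums to \<open>1\<close> over any \<open>p\<close>
  consecutive integers, and so does \<open>a \<mapsto> w(2a)\<close>. Hence adjoining a block of \<open>p\<close>
  consecutive vertices to \<open>{1..m}\<close> raises the pair sum by \<open>m + (p - 1)/2\<close>, and writing
  \<open>n = qp + r\<close> leaves only the pairs inside \<open>{1..r}\<close>. Counting the representations
  \<open>s = a + b\<close> with \<open>1 \<le> a < b \<le> r\<close> gives the weights of \<open>S\<close> for the Legendre part
  and \<open>\<psi>\<close> for the divisibility part.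
\<close>

section \<open>The Legendre symbol\<close>

lemma Legendre_cong:
  assumes "[a = b] (mod m)"
  shows "Legendre a m = Legendre b m"
proof -
  have "[a = 0] (mod m) \<longleftrightarrow> [b = 0] (mod m)"
    using assms cong_sym cong_trans by blast
  moreover have "QuadRes m a \<longleftrightarrow> QuadRes m b"
    unfolding QuadRes_def using assms cong_sym cong_trans by blast
  ultimately show ?thesis
    by (simp add: Legendre_def)
qed

lemma Legendre_eq_0_iff: "Legendre a m = 0 \<longleftrightarrow> m dvd a"
  by (simp add: Legendre_def cong_0_iff)

lemma Legendre_cases: "Legendre a m \<in> {-1, 0, 1}"
  by (simp add: Legendre_def)

lemma Legendre_mult:
  assumes "prime p" "2 < p"
  shows "Legendre (a * b) (int p) = Legendre a (int p) * Legendre b (int p)"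
proof -
  let ?k = "(p - 1) div 2"
  have "[Legendre (a * b) (int p) = a ^ ?k * b ^ ?k] (mod int p)"
    using euler_criterion[OF assms, of "a * b"] by (simp add: power_mult_distrib)
  also have "[a ^ ?k * b ^ ?k = Legendre a (int p) * Legendre b (int p)] (mod int p)"
    using euler_criterion[OF assms] by (intro cong_mult) (auto intro: cong_sym)
  finally have "int p dvd Legendre (a * b) (int p) - Legendre a (int p) * Legendre b (int p)"
    by (simp add: cong_iff_dvd_diff)
  moreover have "\<bar>Legendre (a * b) (int p) - Legendre a (int p) * Legendre b (int p)\<bar> < int p"
  proof -
    have L: "\<bar>Legendre x (int p)\<bar> \<le> 1" for x
      using Legendre_cases[of x "int p"] by auto
    have "\<bar>Legendre a (int p) * Legendre b (int p)\<bar> \<le> 1"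
      unfolding abs_mult using L by (simp add: mult_le_one)
    then show ?thesis
      using L[of "a * b"] assms(2) by linarith
  qed
  ultimately show ?thesis
    using dvd_imp_le_int[of "Legendre (a * b) (int p) - Legendre a (int p) * Legendre b (int p)" "int p"]
    by (cases "Legendre (a * b) (int p) = Legendre a (int p) * Legendre b (int p)") auto
qed

lemma Legendre_nonresidue_exists:
  assumes "prime p" "2 < p"
  obtains g where "Legendre g (int p) = -1"
proof -
  obtain g where g: "residue_primroot p g"
    using prime_primitive_root_exists assms by (meson prime_gt_1_nat)
  have "Legendre (int g) (int p) = -1"
  proof (rule ccontr)
    assume "Legendre (int g) (int p) \<noteq> -1"
    moreover have "\<not> int p dvd int g"
      using g assms(1) unfolding residue_primroot_def
      by (metis coprime_absorb_left int_dvd_int_iff not_prime_unit)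
    ultimately have "Legendre (int g) (int p) = 1"
      using Legendre_cases[of "int g" "int p"] Legendre_eq_0_iff[of "int g" "int p"] by auto
    then have "[g ^ ((p - 1) div 2) = 1] (mod p)"
      using euler_criterion[OF assms, of "int g"] by (metis cong_int_iff cong_sym of_nat_1 of_nat_power)
    then have "ord p g dvd (p - 1) div 2"
      using ord_divides by simp
    moreover have "ord p g = p - 1"
      using g assms(1) by (simp add: residue_primroot_def totient_prime)
    ultimately show False
      using assms(2) by (auto dest!: dvd_imp_le)
  qed
  then show thesis by (rule that)
qed

lemma sum_Legendre_residues_eq_0:
  assumes "prime p" "2 < p"
  shows "(\<Sum>a\<in>{0..<int p}. Legendre a (int p)) = 0"
proof -
  let ?A = "{0..<int p}"
  obtain g where g: "Legendre g (int p) = -1"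
    using Legendre_nonresidue_exists[OF assms] .
  have "coprime g (int p)"
  proof -
    have "\<not> int p dvd g"
      using g Legendre_eq_0_iff[of g "int p"] by simp
    then show ?thesis
      using assms(1) prime_imp_coprime[of "int p" g] by (simp add: coprime_commute)
  qed
  \<comment> \<open>multiplication by the non-residue \<open>g\<close> permutes the residues and flips every symbol\<close>
  have "inj_on (\<lambda>a. g * a mod int p) ?A"
  proof (rule inj_onI)
    fix a b assume "a \<in> ?A" "b \<in> ?A" "g * a mod int p = g * b mod int p"
    then have "[a = b] (mod int p)"
      using cong_mult_lcancel[OF \<open>coprime g (int p)\<close>] by (simp add: cong_def)
    with \<open>a \<in> ?A\<close> \<open>b \<in> ?A\<close> show "a = b"
      by (simp add: cong_def)
  qed
  then have "bij_betw (\<lambda>a. g * a mod int p) ?A ?A"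
    using assms by (intro bij_betw_imageI endo_inj_surj) auto
  then have "(\<Sum>a\<in>?A. Legendre a (int p)) = (\<Sum>a\<in>?A. Legendre (g * a mod int p) (int p))"
    by (rule sum.reindex_bij_betw[symmetric])
  also have "\<dots> = - (\<Sum>a\<in>?A. Legendre a (int p))"
  proof -
    have "Legendre (x mod int p) (int p) = Legendre x (int p)" for x
      by (rule Legendre_cong) (simp add: cong_def)
    then show ?thesis
      using g assms by (simp add: Legendre_mult sum_negf)
  qed
  finally show ?thesis by simp
qed

section \<open>Sums over windows of length \<open>p\<close>\<close>

lemma sum_periodic_window:
  fixes f :: "int \<Rightarrow> 'a::ab_group_add"
  assumes periodic: "\<And>s. f (s + m) = f s"
  shows "(\<Sum>s\<in>{c..<c + m}. f s) = (\<Sum>s\<in>{0..<m}. f s)"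
proof -
  have shift: "(\<Sum>s\<in>{c + 1..<c + 1 + m}. f s) = (\<Sum>s\<in>{c..<c + m}. f s)" for c
  proof (cases "0 < m")
    case True
    have "{c..<c + 1 + m} = insert c {c + 1..<c + 1 + m}"
      and "{c..<c + 1 + m} = insert (c + m) {c..<c + m}"
      using True by auto
    then have "f c + (\<Sum>s\<in>{c + 1..<c + 1 + m}. f s) = f (c + m) + (\<Sum>s\<in>{c..<c + m}. f s)"
      using sum.insert[of "{c + 1..<c + 1 + m}" c f] sum.insert[of "{c..<c + m}" "c + m" f] by simp
    then show ?thesis
      using periodic[of c] by simp
  qed simp
  show ?thesis
  proof (induction c rule: int_induct[where k = 0])
    case (step1 c)
    then show ?case using shift[of c] by simp
  next
    case (step2 c)
    then show ?case using shift[of "c - 1"] by simp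
  qed simp
qed

text \<open>The contribution of an edge with label sum \<open>s\<close> to \<open>e(0) - e(1)\<close>.\<close>

definition legendre_excess :: "nat \<Rightarrow> int \<Rightarrow> int" where
  "legendre_excess p s = (if Legendre s (int p) = 1 then -1 else 1)"

lemma legendre_excess_eq: "legendre_excess p s = of_bool (int p dvd s) - Legendre s (int p)"
  using Legendre_cases[of s "int p"] Legendre_eq_0_iff[of s "int p"]
  by (auto simp: legendre_excess_def)

lemma sum_dvd_window:
  fixes m :: int
  assumes "0 < m"
  shows "(\<Sum>s\<in>{c..<c + m}. of_bool (m dvd s)) = (1::int)"
proof -
  have "(\<Sum>s\<in>{c..<c + m}. of_bool (m dvd s)) = (\<Sum>s\<in>{0..<m}. of_bool (m dvd s) :: int)"
    by (rule sum_periodic_window) simp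
  also have "\<dots> = (\<Sum>s\<in>{0..<m}. of_bool (s = 0))"
  proof (rule sum.cong)
    fix s assume "s \<in> {0..<m}"
    then show "of_bool (m dvd s) = (of_bool (s = 0) :: int)"
      using zdvd_not_zless[of s m] by auto
  qed simp
  also have "\<dots> = 1"
    using assms by simp
  finally show ?thesis .
qed

lemma sum_Legendre_window:
  assumes "prime p" "2 < p"
  shows "(\<Sum>s\<in>{c..<c + int p}. Legendre s (int p)) = 0"
proof -
  have "(\<Sum>s\<in>{c..<c + int p}. Legendre s (int p)) = (\<Sum>s\<in>{0..<int p}. Legendre s (int p))"
    by (rule sum_periodic_window, rule Legendre_cong) (simp add: cong_def)
  then show ?thesis
    using sum_Legendre_residues_eq_0[OF assms] by simp
qed

lemma sum_legendre_excess_window: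
  assumes "prime p" "2 < p"
  shows "(\<Sum>b\<in>{c..<c + int p}. legendre_excess p (a + b)) = 1"
proof -
  have "(\<Sum>b\<in>{c..<c + int p}. legendre_excess p (a + b))
      = (\<Sum>s\<in>{a + c..<a + c + int p}. legendre_excess p s)"
    by (rule sum.reindex_bij_witness[of _ "\<lambda>s. s - a" "\<lambda>b. a + b"]) auto
  then show ?thesis
    using sum_dvd_window[of "int p" "a + c"] sum_Legendre_window[OF assms, of "a + c"] assms
    by (simp add: legendre_excess_eq sum_subtractf)
qed

lemma sum_legendre_excess_double_window:
  assumes "prime p" "2 < p"
  shows "(\<Sum>a\<in>{c..<c + int p}. legendre_excess p (2 * a)) = 1"
proof -
  have "int p dvd 2 * a \<longleftrightarrow> int p dvd a" for a
  proof -
    have "\<not> int p dvd 2"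
      using assms(2) zdvd_not_zless[of 2 "int p"] by simp
    then show ?thesis
      using assms(1) prime_dvd_mult_iff[of "int p" 2 a] by simp
  qed
  then have "(\<Sum>a\<in>{c..<c + int p}. legendre_excess p (2 * a))
      = (\<Sum>a\<in>{c..<c + int p}. of_bool (int p dvd a)) - Legendre 2 (int p) * (\<Sum>a\<in>{c..<c + int p}. Legendre a (int p))"
    using assms by (simp add: legendre_excess_eq Legendre_mult sum_subtractf sum_distrib_left)
  then show ?thesis
    using sum_dvd_window[of "int p" c] sum_Legendre_window[OF assms, of c] assms by simp
qed

section \<open>Sums over pairs\<close>

definition pair_sum :: "('a::{linorder, plus} \<Rightarrow> 'b::comm_monoid_add) \<Rightarrow> 'a set \<Rightarrow> 'b" where
  "pair_sum g A = (\<Sum>(a, b)\<in>{(a, b) \<in> A \<times> A. a < b}. g (a + b))"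

lemma pair_sum_diff:
  "pair_sum (\<lambda>s. f s - g s) A = pair_sum f A - (pair_sum g A :: 'b::ab_group_add)"
  unfolding pair_sum_def by (simp add: case_prod_unfold sum_subtractf)

lemma pair_sum_union:
  assumes "finite A" "finite B" and below: "\<And>a b. a \<in> A \<Longrightarrow> b \<in> B \<Longrightarrow> a < b"
  shows "pair_sum g (A \<union> B) = pair_sum g A + pair_sum g B + (\<Sum>a\<in>A. \<Sum>b\<in>B. g (a + b))"
proof -
  let ?P = "\<lambda>A. {(a, b) \<in> A \<times> A. a < b}"
  have "?P (A \<union> B) = (?P A \<union> ?P B) \<union> A \<times> B"
    using below by (auto dest: order.asym)
  moreover have "?P A \<inter> ?P B = {}" "(?P A \<union> ?P B) \<inter> A \<times> B = {}"
    using below by (auto dest: order.asym)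
  moreover have "finite (?P A)" "finite (?P B)"
    using assms(1,2) by (auto intro: finite_subset[of _ "A \<times> A"] finite_subset[of _ "B \<times> B"])
  ultimately show ?thesis
    using assms(1,2) unfolding pair_sum_def
    by (simp add: sum.union_disjoint sum.cartesian_product)
qed

lemma two_pair_sum:
  fixes g :: "'a::{linorder, ab_semigroup_add} \<Rightarrow> 'b::comm_ring_1"
  assumes "finite A"
  shows "2 * pair_sum g A = (\<Sum>a\<in>A. \<Sum>b\<in>A. g (a + b)) - (\<Sum>a\<in>A. g (a + a))"
proof -
  let ?P = "{(a, b) \<in> A \<times> A. a < b}"
  let ?Q = "{(a, b) \<in> A \<times> A. b < a}"
  let ?D = "{(a, b) \<in> A \<times> A. a = b}"
  have "finite ?P" "finite ?Q" "finite ?D"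
    using assms by (auto intro: finite_subset[of _ "A \<times> A"])
  have "(\<Sum>a\<in>A. \<Sum>b\<in>A. g (a + b)) = (\<Sum>(a, b)\<in>A \<times> A. g (a + b))"
    by (simp add: sum.cartesian_product)
  also have "A \<times> A = (?P \<union> ?Q) \<union> ?D"
    by auto
  also have "(\<Sum>(a, b)\<in>(?P \<union> ?Q) \<union> ?D. g (a + b))
      = pair_sum g A + (\<Sum>(a, b)\<in>?Q. g (a + b)) + (\<Sum>(a, b)\<in>?D. g (a + b))"
  proof -
    have "?P \<inter> ?Q = {}" "(?P \<union> ?Q) \<inter> ?D = {}"
      by auto
    then show ?thesis
      using \<open>finite ?P\<close> \<open>finite ?Q\<close> \<open>finite ?D\<close>
      by (simp add: sum.union_disjoint pair_sum_def)
  qed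
  finally have whole: "(\<Sum>a\<in>A. \<Sum>b\<in>A. g (a + b))
      = pair_sum g A + (\<Sum>(a, b)\<in>?Q. g (a + b)) + (\<Sum>(a, b)\<in>?D. g (a + b))" .
  have swap: "(\<Sum>(a, b)\<in>?Q. g (a + b)) = pair_sum g A"
    unfolding pair_sum_def
    by (rule sum.reindex_bij_witness[of _ prod.swap prod.swap]) (auto simp: add.commute)
  have diagonal: "(\<Sum>(a, b)\<in>?D. g (a + b)) = (\<Sum>a\<in>A. g (a + a))"
    by (rule sum.reindex_bij_witness[of _ "\<lambda>a. (a, a)" fst]) auto
  show ?thesis
    unfolding whole swap diagonal mult_2 by simp
qed

definition pair_reps :: "int \<Rightarrow> int \<Rightarrow> nat" where
  "pair_reps r s = card {(a, b). 1 \<le> a \<and> a < b \<and> b \<le> r \<and> a + b = s}"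

lemma pair_reps_eq: "pair_reps r s = nat ((s - 1) div 2 - max 1 (s - r) + 1)"
proof -
  have "{(a, b). 1 \<le> a \<and> a < b \<and> b \<le> r \<and> a + b = s}
      = (\<lambda>a. (a, s - a)) ` {max 1 (s - r)..(s - 1) div 2}"
  proof -
    have "a \<le> (s - 1) div 2 \<longleftrightarrow> a < s - a" for a :: int
      by presburger
    then show ?thesis
      by (auto simp: image_iff)
  qed
  moreover have "inj_on (\<lambda>a. (a, s - a)) A" for A
    by (rule inj_onI) simp
  ultimately show ?thesis
    unfolding pair_reps_def by (simp add: card_image)
qed

lemma pair_sum_eq_sum_pair_reps:
  fixes g :: "int \<Rightarrow> 'b::comm_semiring_1"
  shows "pair_sum g {1..r} = (\<Sum>s\<in>{2..2 * r}. of_nat (pair_reps r s) * g s)"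
proof -
  let ?P = "{(a, b) \<in> {1..r} \<times> {1..r}. a < b}"
  have "finite ?P"
    by (rule finite_subset[of _ "{1..r} \<times> {1..r}"]) auto
  moreover have "(\<lambda>(a, b). a + b) ` ?P \<subseteq> {2..2 * r}"
    by auto
  ultimately have "pair_sum g {1..r}
      = (\<Sum>s\<in>{2..2 * r}. \<Sum>x\<in>{x \<in> ?P. (\<lambda>(a, b). a + b) x = s}. (\<lambda>(a, b). g (a + b)) x)"
    unfolding pair_sum_def by (intro sum.group[symmetric]) auto
  also have "\<dots> = (\<Sum>s\<in>{2..2 * r}. of_nat (pair_reps r s) * g s)"
  proof (rule sum.cong)
    fix s
    have "{x \<in> ?P. (\<lambda>(a, b). a + b) x = s} = {(a, b). 1 \<le> a \<and> a < b \<and> b \<le> r \<and> a + b = s}"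
      by auto
    then show "(\<Sum>x\<in>{x \<in> ?P. (\<lambda>(a, b). a + b) x = s}. (\<lambda>(a, b). g (a + b)) x)
        = of_nat (pair_reps r s) * g s"
      unfolding pair_reps_def by (simp add: case_prod_unfold)
  qed simp
  finally show ?thesis .
qed

lemma two_pair_sum_interval:
  fixes g :: "int \<Rightarrow> int"
  assumes "0 \<le> r"
  shows "2 * pair_sum g {1..r}
    = (\<Sum>s\<in>{2..r + 1}. (s - 1 - (if even s then 1 else 0)) * g s)
    + (\<Sum>s\<in>{r + 2..2 * r}. (2 * r - s + 1 - (if even s then 1 else 0)) * g s)"
proof -
  have "2 * pair_sum g {1..r} = (\<Sum>s\<in>{2..2 * r}. 2 * int (pair_reps r s) * g s)"
    by (simp add: pair_sum_eq_sum_pair_reps sum_distrib_left mult.assoc)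
  also have "{2..2 * r} = {2..r + 1} \<union> {r + 2..2 * r}"
    using assms by auto
  also have "(\<Sum>s\<in>{2..r + 1} \<union> {r + 2..2 * r}. 2 * int (pair_reps r s) * g s)
      = (\<Sum>s\<in>{2..r + 1}. 2 * int (pair_reps r s) * g s)
      + (\<Sum>s\<in>{r + 2..2 * r}. 2 * int (pair_reps r s) * g s)"
    by (rule sum.union_disjoint) auto
  also have "(\<Sum>s\<in>{2..r + 1}. 2 * int (pair_reps r s) * g s)
      = (\<Sum>s\<in>{2..r + 1}. (s - 1 - (if even s then 1 else 0)) * g s)"
    by (rule sum.cong) (simp_all add: pair_reps_eq, presburger)
  also have "(\<Sum>s\<in>{r + 2..2 * r}. 2 * int (pair_reps r s) * g s)
      = (\<Sum>s\<in>{r + 2..2 * r}. (2 * r - s + 1 - (if even s then 1 else 0)) * g s)"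
    by (rule sum.cong) (simp_all add: pair_reps_eq, presburger)
  finally show ?thesis .
qed

lemma dvd_iff_eq_below_double:
  fixes p s :: int
  assumes "0 < s" "s < 2 * p"
  shows "p dvd s \<longleftrightarrow> s = p"
proof
  assume "p dvd s"
  moreover have "\<not> p dvd s" if "s < p"
    using zdvd_not_zless[OF assms(1) that] .
  moreover have "\<not> p dvd s - p" if "p < s"
    using zdvd_not_zless[of "s - p" p] that assms(2) by simp
  ultimately show "s = p"
    by (metis dvd_diff dvd_refl linorder_neqE)
qed simp

lemma two_pair_sum_of_bool_dvd:
  fixes p r :: int
  assumes "odd p" "0 \<le> r" "r < p"
  shows "2 * pair_sum (\<lambda>s. of_bool (p dvd s)) {1..r} = max 0 (2 * r - p + 1)"
proof -
  have "pair_sum (\<lambda>s. of_bool (p dvd s)) {1..r}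
      = (\<Sum>s\<in>{2..2 * r}. int (pair_reps r s) * of_bool (p dvd s))"
    by (rule pair_sum_eq_sum_pair_reps)
  also have "\<dots> = (\<Sum>s\<in>{2..2 * r}. if s = p then int (pair_reps r p) else 0)"
    by (rule sum.cong) (use assms dvd_iff_eq_below_double in auto)
  also have "\<dots> = (if p \<in> {2..2 * r} then int (pair_reps r p) else 0)"
    by (rule sum.delta) simp
  finally show ?thesis
    using assms by (simp add: pair_reps_eq) presburger
qed

lemma two_pair_sum_legendre_excess_window:
  assumes "prime p" "2 < p"
  shows "2 * pair_sum (legendre_excess p) {c..<c + int p} = int p - 1"
  using two_pair_sum[of "{c..<c + int p}" "legendre_excess p"] assms
  by (simp add: sum_legendre_excess_window sum_legendre_excess_double_window)

lemma two_pair_sum_legendre_excess_add_period: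
  assumes "prime p" "2 < p" "0 \<le> m"
  shows "2 * pair_sum (legendre_excess p) {1..m + int p}
    = 2 * pair_sum (legendre_excess p) {1..m} + 2 * m + int p - 1"
proof -
  let ?W = "{m + 1..<m + 1 + int p}"
  have "{1..m + int p} = {1..m} \<union> ?W"
    using assms(3) by auto
  then have "pair_sum (legendre_excess p) {1..m + int p} = pair_sum (legendre_excess p) ({1..m} \<union> ?W)"
    by simp
  also have "\<dots> = pair_sum (legendre_excess p) {1..m}
      + pair_sum (legendre_excess p) ?W + (\<Sum>a\<in>{1..m}. \<Sum>b\<in>?W. legendre_excess p (a + b))"
    by (rule pair_sum_union) auto
  also have "(\<Sum>a\<in>{1..m}. \<Sum>b\<in>?W. legendre_excess p (a + b)) = m"
    using assms by (simp add: sum_legendre_excess_window)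
  finally show ?thesis
    using two_pair_sum_legendre_excess_window[OF assms(1,2), of "m + 1"] by simp
qed

lemma two_pair_sum_legendre_excess_reduce:
  assumes "prime p" "2 < p" "0 \<le> r"
  shows "2 * pair_sum (legendre_excess p) {1..int q * int p + r}
    = 2 * pair_sum (legendre_excess p) {1..r} + int p * int q ^ 2 + 2 * int q * r - int q"
proof (induction q)
  case (Suc q)
  have "int (Suc q) * int p + r = (int q * int p + r) + int p"
    by (simp add: algebra_simps)
  then show ?case
    using two_pair_sum_legendre_excess_add_period[OF assms(1,2), of "int q * int p + r"] Suc assms(3)
    by (simp add: algebra_simps power2_eq_square)
qed simp

section \<open>Legendre cordial labelings of complete graphs\<close>

lemma finite_complete_graph_edges: "finite V \<Longrightarrow> finite (complete_graph_edges V)"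
  unfolding complete_graph_edges_def by (rule finite_subset[of _ "Pow V"]) auto

lemma bij_betw_complete_graph_edges:
  assumes "bij_betw f V W"
  shows "bij_betw (image f) (complete_graph_edges V) (complete_graph_edges W)"
proof (rule bij_betw_imageI)
  have inj: "inj_on f V" and img: "f ` V = W"
    using assms by (auto simp: bij_betw_def)
  show "inj_on (image f) (complete_graph_edges V)"
    using inj by (intro inj_onI) (auto simp: complete_graph_edges_def inj_on_image_eq_iff)
  show "image f ` complete_graph_edges V = complete_graph_edges W"
  proof
    show "image f ` complete_graph_edges V \<subseteq> complete_graph_edges W"
      using inj img by (auto simp: complete_graph_edges_def card_image inj_on_subset)
  next
    show "complete_graph_edges W \<subseteq> image f ` complete_graph_edges V"
    proof
      fix e' assume "e' \<in> complete_graph_edges W"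
      then have e': "e' \<subseteq> W" "card e' = 2"
        by (auto simp: complete_graph_edges_def)
      let ?e = "V \<inter> f -` e'"
      have "f ` ?e = e'"
        using e'(1) img by auto
      moreover have "card ?e = 2"
        using e'(2) \<open>f ` ?e = e'\<close> card_image[OF inj_on_subset[OF inj, of ?e]] by auto
      ultimately show "e' \<in> image f ` complete_graph_edges V"
        by (auto simp: complete_graph_edges_def)
    qed
  qed
qed

lemma sum_complete_graph_edges:
  "(\<Sum>e\<in>complete_graph_edges {1..n}. g (int (\<Sum>x\<in>e. x))) = pair_sum g {1..int n}"
  unfolding pair_sum_def
proof (rule sum.reindex_bij_witness[of _ "\<lambda>(a, b). {nat a, nat b}" "\<lambda>e. (int (Min e), int (Max e))"])
  fix e assume "e \<in> complete_graph_edges {1..n}"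
  then have "e \<subseteq> {1..n}" "card e = 2"
    by (auto simp: complete_graph_edges_def)
  then obtain x y where e: "e = {x, y}" "x < y" "{x, y} \<subseteq> {1..n}"
    by (metis card_2_iff linorder_neqE_nat insert_commute)
  then show "(\<lambda>(a, b). {nat a, nat b}) (int (Min e), int (Max e)) = e"
    and "(int (Min e), int (Max e)) \<in> {(a, b) \<in> {1..int n} \<times> {1..int n}. a < b}"
    and "(\<lambda>(a, b). g (a + b)) (int (Min e), int (Max e)) = g (int (\<Sum>x\<in>e. x))"
    by auto
next
  fix ab assume "ab \<in> {(a, b) \<in> {1..int n} \<times> {1..int n}. a < b}"
  then obtain a b where ab: "ab = (a, b)" "1 \<le> a" "a < b" "b \<le> int n"
    by auto
  then have "nat a < nat b"
    by simp
  then show "(int (Min ((\<lambda>(a, b). {nat a, nat b}) ab)), int (Max ((\<lambda>(a, b). {nat a, nat b}) ab))) = ab"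
    and "(\<lambda>(a, b). {nat a, nat b}) ab \<in> complete_graph_edges {1..n}"
    using ab by (auto simp: complete_graph_edges_def)
qed

lemma card_label_0_minus_card_label_1:
  assumes "finite E"
  shows "int (card {e \<in> E. legendre_edge_label p f e = 0}) - int (card {e \<in> E. legendre_edge_label p f e = 1})
    = (\<Sum>e\<in>E. legendre_excess p (int (\<Sum>x\<in>e. f x)))"
proof -
  have "int (card {e \<in> E. P e}) = (\<Sum>e\<in>E. of_bool (P e))" for P
    using assms by (simp add: sum.inter_filter[symmetric] Int_def)
  then show ?thesis
    by (auto simp: sum_subtractf[symmetric] legendre_edge_label_def legendre_excess_def intro!: sum.cong)
qed

lemma sum_legendre_excess_relabel:
  assumes "bij_betw f {1..n} {1..n}"
  shows "(\<Sum>e\<in>complete_graph_edges {1..n}. legendre_excess p (int (\<Sum>x\<in>e. f x)))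
    = (\<Sum>e\<in>complete_graph_edges {1..n}. legendre_excess p (int (\<Sum>x\<in>e. x)))"
proof -
  have "(\<Sum>x\<in>e. f x) = (\<Sum>x\<in>f ` e. x)" if "e \<in> complete_graph_edges {1..n}" for e
  proof -
    have "inj_on f e"
      using that assms inj_on_subset by (auto simp: complete_graph_edges_def bij_betw_def)
    then show ?thesis
      by (simp add: sum.reindex)
  qed
  then have "(\<Sum>e\<in>complete_graph_edges {1..n}. legendre_excess p (int (\<Sum>x\<in>e. f x)))
      = (\<Sum>e\<in>complete_graph_edges {1..n}. legendre_excess p (int (\<Sum>x\<in>f ` e. x)))"
    by (intro sum.cong) simp_all
  also have "\<dots> = (\<Sum>e\<in>complete_graph_edges {1..n}. legendre_excess p (int (\<Sum>x\<in>e. x)))"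
    using bij_betw_complete_graph_edges[OF assms] by (rule sum.reindex_bij_betw)
  finally show ?thesis .
qed

lemma legendre_cordial_complete_graph_iff:
  "legendre_cordial_graph {1..n} (complete_graph_edges {1..n}) p
    \<longleftrightarrow> \<bar>pair_sum (legendre_excess p) {1..int n}\<bar> \<le> 1"
proof -
  have balance: "int (card {e \<in> complete_graph_edges {1..n}. legendre_edge_label p f e = 0})
      - int (card {e \<in> complete_graph_edges {1..n}. legendre_edge_label p f e = 1})
      = pair_sum (legendre_excess p) {1..int n}"
    if "bij_betw f {1..n} {1..n}" for f
  proof -
    have "int (card {e \<in> complete_graph_edges {1..n}. legendre_edge_label p f e = 0})
        - int (card {e \<in> complete_graph_edges {1..n}. legendre_edge_label p f e = 1})
        = (\<Sum>e\<in>complete_graph_edges {1..n}. legendre_excess p (int (\<Sum>x\<in>e. f x)))"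
      by (rule card_label_0_minus_card_label_1) (simp add: finite_complete_graph_edges)
    also have "\<dots> = (\<Sum>e\<in>complete_graph_edges {1..n}. legendre_excess p (int (\<Sum>x\<in>e. x)))"
      using that by (rule sum_legendre_excess_relabel)
    also have "\<dots> = pair_sum (legendre_excess p) {1..int n}"
      by (rule sum_complete_graph_edges)
    finally show ?thesis .
  qed
  show ?thesis
  proof
    assume "legendre_cordial_graph {1..n} (complete_graph_edges {1..n}) p"
    then obtain f where "bij_betw f {1..n} {1..n}"
      and "\<bar>int (card {e \<in> complete_graph_edges {1..n}. legendre_edge_label p f e = 0})
        - int (card {e \<in> complete_graph_edges {1..n}. legendre_edge_label p f e = 1})\<bar> \<le> 1"
      unfolding legendre_cordial_graph_def legendre_cordial_labeling_def by auto
    then show "\<bar>pair_sum (legendre_excess p) {1..int n}\<bar> \<le> 1"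
      using balance by simp
  next
    assume "\<bar>pair_sum (legendre_excess p) {1..int n}\<bar> \<le> 1"
    then show "legendre_cordial_graph {1..n} (complete_graph_edges {1..n}) p"
      unfolding legendre_cordial_graph_def legendre_cordial_labeling_def
      using balance[OF bij_betw_id] by (intro exI[of _ id]) simp
  qed
qed

lemma two_pair_sum_legendre_excess_eq:
  fixes p n :: nat
  assumes "prime p" "2 < p"
  defines "q \<equiv> int (n div p)" and "r \<equiv> int n - int (n div p) * int p"
  shows "2 * pair_sum (legendre_excess p) {1..int n}
    = 2 * int n * q - int p * q\<^sup>2 - q + max 0 (2 * r - int p + 1)
      - ((\<Sum>s\<in>{2..r + 1} - {int p}. (s - 1 - (if even s then 1 else 0)) * Legendre s (int p))
       + (\<Sum>s\<in>{r + 2..2 * r} - {int p}. (2 * r - s + 1 - (if even s then 1 else 0)) * Legendre s (int p)))"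
proof -
  let ?L = "\<lambda>s. Legendre s (int p)"
  have "int n = q * int p + int (n mod p)"
    unfolding q_def by (metis div_mult_mod_eq of_nat_add of_nat_mult)
  then have n: "int n = q * int p + r" and r: "0 \<le> r" "r < int p"
    using assms(1,2) unfolding r_def q_def by simp_all
  have "(\<Sum>s\<in>A - {int p}. c s * ?L s) = (\<Sum>s\<in>A. c s * ?L s)" if "finite A" for A c
    using that by (simp add: sum_diff1 Legendre_eq_0_iff)
  then have S: "(\<Sum>s\<in>{2..r + 1} - {int p}. (s - 1 - (if even s then 1 else 0)) * ?L s)
      + (\<Sum>s\<in>{r + 2..2 * r} - {int p}. (2 * r - s + 1 - (if even s then 1 else 0)) * ?L s)
      = 2 * pair_sum ?L {1..r}"
    by (simp add: two_pair_sum_interval[OF r(1)])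
  have "legendre_excess p = (\<lambda>s. of_bool (int p dvd s) - ?L s)"
    by (rule ext) (rule legendre_excess_eq)
  then have "2 * pair_sum (legendre_excess p) {1..r} = max 0 (2 * r - int p + 1) - 2 * pair_sum ?L {1..r}"
    using two_pair_sum_of_bool_dvd[of "int p" r] assms(1,2) r
    by (simp add: pair_sum_diff right_diff_distrib prime_odd_nat)
  then show ?thesis
    unfolding S using two_pair_sum_legendre_excess_reduce[OF assms(1,2) r(1), of "n div p"] n
    by (simp add: q_def algebra_simps power2_eq_square)
qed

lemma abs_le_1_iff_double:
  fixes x S T :: int
  assumes "2 * x = T - S"
  shows "\<bar>x\<bar> \<le> 1 \<longleftrightarrow> S = T \<or> S = T + 2 \<or> S = T - 2"
  using assms by (simp add: abs_le_iff) presburger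

theorem theorem3p3:
  fixes p n :: nat
  assumes "prime p" and "odd p" and "n \<ge> 1"
  shows "legendre_cordial_graph {1..n} (complete_graph_edges {1..n}) p \<longleftrightarrow>
    (let q = int (n div p);
         r = int n - q * int p;
         \<psi> = max 0 (2 * r - int p + 1);
         \<delta> = (\<lambda>s::int. if even s then 1 else (0::int));
         S1 = (\<Sum>s\<in>{2..r+1} - {int p}. (s - 1 - \<delta> s) * Legendre s (int p));
         S2 = (\<Sum>s\<in>{r+2..2*r} - {int p}. (2*r - s + 1 - \<delta> s) * Legendre s (int p));
         S = S1 + S2;
         T = 2 * int n * q - int p * q^2 - q + \<psi>
     in S = T \<or> S = T + 2 \<or> S = T - 2)"
proof -
  have "2 < p"
    using assms(1,2) prime_ge_2_nat[of p] by (auto simp: le_less)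
  from abs_le_1_iff_double[OF two_pair_sum_legendre_excess_eq[OF assms(1) this]] show ?thesis
    unfolding legendre_cordial_complete_graph_iff Let_def .
qed

end
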